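(* Let $f_i:\mathbb{R}^{n_{i-1}}\to\mathbb{R}^{n_i}$ and $g_i:\mathbb{R}^{n_i}\to\mathbb{R}^{n_{i-1}}$, let $\mathbf{h}_{i-1}\in\mathbb{R}^{n_{i-1}}$ and $\mathbf{h}_i=f_i(\mathbf{h}_{i-1})$. For a target $\hat{\mathbf{h}}_i\in\mathbb{R}^{n_i}$, define the difference-target-propagation target of layer $i-1$ by $$\hat{\mathbf{h}}_{i-1}=\mathbf{h}_{i-1}+g_i(\hat{\mathbf{h}}_i)-g_i(\mathbf{h}_i).$$ Assume $f_i$ is differentiable at $\mathbf{h}_{i-1}$ with Jacobian $J_{f_i}$ and $g_i$ is differentiable at $\mathbf{h}_i$ with Jacobian $J_{g_i}$, and that the largest eigenvalue of $(I-J_{f_i}J_{g_i})^T(I-J_{f_i}J_{g_i})$ is less than $1$. Then, if $\hat{\mathbf{h}}_i-\mathbf{h}_i$ is sufficiently small (and nonzero), i.e. there is $\delta>0$ such that for every $\hat{\mathbf{h}}_i$ with $0<\|\hat{\mathbf{h}}_i-\mathbf{h}_i\|_2<\delta$, $$\|\hat{\mathbf{h}}_i-f_i(\hat{\mathbf{h}}_{i-1})\|_2^2<\|\hat{\mathbf{h}}_i-\mathbf{h}_i\|_2^2.$$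
   Context: In a layered network $\mathbf{h}_i=f_i(\mathbf{h}_{i-1})$, $g_i$ is a learned feedback map meant to approximately invert $f_i$; $\hat{\mathbf{h}}_i$ is a target value for layer $i$. *)

theory Defs
  imports "HOL-Analysis.Analysis"
begin

definition matrix_eigenvalue :: "real^'n^'n \<Rightarrow> real \<Rightarrow> bool" where
  "matrix_eigenvalue M l \<longleftrightarrow> (\<exists>v. v \<noteq> 0 \<and> M *v v = l *\<^sub>R v)"

definition largest_eigenvalue :: "real^'n^'n \<Rightarrow> real" where
  "largest_eigenvalue M = Max {l. matrix_eigenvalue M l}"

end

theory Submission imports Defs begin

text \<open>
  The residual map \<open>ht \<mapsto> ht - f (h + g ht - g (f h))\<close> vanishes at \<open>f h\<close> and, by the chain rule,
  has derivative \<open>A = I - J\<^sub>f J\<^sub>g\<close> there. The largest eigenvalue of \<open>A\<^sup>T A\<close> is the maximum of the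
  Rayleigh quotient \<open>\<parallel>A v\<parallel>\<^sup>2 / \<parallel>v\<parallel>\<^sup>2\<close>, so the eigenvalue hypothesis makes \<open>A\<close> a strict contraction.
  A map whose derivative is a strict contraction brings nearby points strictly closer to the image
  of the base point; here that image is \<open>0\<close>, which is the claimed decrease of \<open>\<parallel>ht - f(\<dots>)\<parallel>\<close>.
\<close>

lemma inner_gram_matrix:
  fixes A :: "real^'n^'m"
  shows "inner ((transpose A ** A) *v x) y = inner (A *v x) (A *v y)"
  by (metis dot_lmul_matrix matrix_vector_mul_assoc transpose_matrix_vector)

lemma linear_coeff_zero_if_quadratic_nonneg:
  fixes b c :: real
  assumes "c \<ge> 0" and "\<And>t. 2 * t * b + t\<^sup>2 * c \<ge> 0"
  shows "b = 0"
proof (rule ccontr)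
  assume "b \<noteq> 0"
  define t where "t = - b / (c + 1)"
  have "2 * t * b + t\<^sup>2 * c = b\<^sup>2 * (- (c + 2)) / (c + 1)\<^sup>2"
    using \<open>c \<ge> 0\<close> unfolding t_def
    by (simp add: divide_simps power2_eq_square) (simp add: algebra_simps)
  also have "\<dots> < 0"
    using \<open>b \<noteq> 0\<close> \<open>c \<ge> 0\<close> by (intro divide_neg_pos mult_pos_neg) auto
  finally show False
    using assms(2)[of t] by linarith
qed

lemma matrix_vector_norm_attains_max:
  fixes A :: "real^'n^'m"
  obtains v0 where "norm v0 = 1" "\<And>v. (norm (A *v v))\<^sup>2 \<le> (norm (A *v v0))\<^sup>2 * (norm v)\<^sup>2"
proof -
  have "sphere (0::real^'n) 1 \<noteq> {}"
    by (simp add: sphere_def) (metis norm_axis_1)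
  moreover have "continuous_on (sphere 0 1) (\<lambda>v. (norm (A *v v))\<^sup>2)"
    by (intro continuous_intros
        continuous_on_compose2[OF _ matrix_vector_mult_linear_continuous_on]) auto
  ultimately obtain v0 where "v0 \<in> sphere 0 1"
    and max: "\<forall>u\<in>sphere 0 1. (norm (A *v u))\<^sup>2 \<le> (norm (A *v v0))\<^sup>2"
    using continuous_attains_sup[OF compact_sphere] by blast
  then have v0: "norm v0 = 1" by simp
  have "norm (A *v v) \<le> norm (A *v v0) * norm v" for v
  proof (cases "v = 0")
    case False
    have "A *v (v /\<^sub>R norm v) = (A *v v) /\<^sub>R norm v"
      by (simp add: matrix_vector_mult_scaleR)
    then have "norm (A *v v) / norm v \<le> norm (A *v v0)"
      using max[rule_format, of "v /\<^sub>R norm v"] False by (simp add: divide_inverse_commute)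
    then show ?thesis
      using False by (simp add: divide_le_eq)
  qed simp
  then have "(norm (A *v v))\<^sup>2 \<le> (norm (A *v v0))\<^sup>2 * (norm v)\<^sup>2" for v
    by (metis norm_ge_zero power_mono power_mult_distrib)
  with v0 show ?thesis
    using that by blast
qed

text \<open>The nonnegative quadratic form \<open>\<mu> \<parallel>v\<parallel>\<^sup>2 - \<parallel>A v\<parallel>\<^sup>2\<close> vanishes at \<open>v0\<close>, so its first
  variation \<open>2 \<langle>\<mu> v0 - A\<^sup>T A v0, y\<rangle>\<close> vanishes in every direction \<open>y\<close>.\<close>

lemma gram_matrix_eigenvector_at_maximizer:
  fixes A :: "real^'n^'m"
  assumes bound: "\<And>v. (norm (A *v v))\<^sup>2 \<le> \<mu> * (norm v)\<^sup>2"
    and attained: "(norm (A *v v0))\<^sup>2 = \<mu> * (norm v0)\<^sup>2"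
  shows "(transpose A ** A) *v v0 = \<mu> *\<^sub>R v0"
proof -
  define Q where "Q v = \<mu> * inner v v - inner (A *v v) (A *v v)" for v
  define r where "r = \<mu> *\<^sub>R v0 - (transpose A ** A) *v v0"
  have Q_nonneg: "Q v \<ge> 0" for v
    using bound[of v] by (simp add: Q_def power2_norm_eq_inner)
  have "inner r y = \<mu> * inner v0 y - inner (A *v v0) (A *v y)" for y
    by (simp add: r_def inner_diff_left inner_gram_matrix)
  moreover have "Q (v0 + t *\<^sub>R y)
      = Q v0 + 2 * t * (\<mu> * inner v0 y - inner (A *v v0) (A *v y)) + t\<^sup>2 * Q y" for t y
    unfolding Q_def
    by (simp add: matrix_vector_right_distrib
        matrix_vector_mult_scaleR inner_add inner_commute algebra_simps power2_eq_square)
  ultimately have Q_expand: "Q (v0 + t *\<^sub>R y) = Q v0 + 2 * t * inner r y + t\<^sup>2 * Q y" for t y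
    by simp
  have "Q v0 = 0"
    using attained by (simp add: Q_def power2_norm_eq_inner)
  have "inner r y = 0" for y
  proof (rule linear_coeff_zero_if_quadratic_nonneg[OF Q_nonneg])
    fix t
    show "0 \<le> 2 * t * inner r y + t\<^sup>2 * Q y"
      using Q_nonneg[of "v0 + t *\<^sub>R y"] Q_expand[of t y] \<open>Q v0 = 0\<close> by simp
  qed
  then have "r = 0"
    using inner_eq_zero_iff by blast
  then show ?thesis
    by (simp add: r_def)
qed

lemma gram_matrix_eigenvalue_le:
  fixes A :: "real^'n^'m"
  assumes "matrix_eigenvalue (transpose A ** A) l"
    and bound: "\<And>v. (norm (A *v v))\<^sup>2 \<le> \<mu> * (norm v)\<^sup>2"
  shows "l \<le> \<mu>"
proof -
  obtain v where "v \<noteq> 0" and v: "(transpose A ** A) *v v = l *\<^sub>R v"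
    using assms(1) unfolding matrix_eigenvalue_def by blast
  have "l * (norm v)\<^sup>2 = inner ((transpose A ** A) *v v) v"
    by (simp only: v inner_scaleR_left power2_norm_eq_inner)
  also have "\<dots> = (norm (A *v v))\<^sup>2"
    by (simp only: inner_gram_matrix power2_norm_eq_inner)
  also have "\<dots> \<le> \<mu> * (norm v)\<^sup>2"
    by (rule bound)
  finally show ?thesis
    using \<open>v \<noteq> 0\<close> by simp
qed

text \<open>Finiteness is what makes \<open>largest_eigenvalue\<close>, a \<open>Max\<close>, meaningful. Eigenvectors for
  distinct eigenvalues of a symmetric matrix are orthogonal, hence independent.\<close>

lemma finite_eigenvalues_symmetric:
  fixes M :: "real^'n^'n"
  assumes sym: "\<And>x y. inner (M *v x) y = inner x (M *v y)"
  shows "finite {l. matrix_eigenvalue M l}"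
proof -
  define S where "S = {l. matrix_eigenvalue M l}"
  define e where "e l = (SOME v. v \<noteq> 0 \<and> M *v v = l *\<^sub>R v)" for l
  have e_nz: "e l \<noteq> 0" and e_eig: "M *v e l = l *\<^sub>R e l" if "l \<in> S" for l
    using someI_ex[of "\<lambda>v. v \<noteq> 0 \<and> M *v v = l *\<^sub>R v"] that
    by (auto simp: S_def matrix_eigenvalue_def e_def)
  have inj: "inj_on e S"
  proof (rule inj_onI)
    fix a b assume "a \<in> S" "b \<in> S" "e a = e b"
    have "a *\<^sub>R e a = M *v e b"
      using e_eig[OF \<open>a \<in> S\<close>] \<open>e a = e b\<close> by simp
    also have "\<dots> = b *\<^sub>R e a"
      using e_eig[OF \<open>b \<in> S\<close>] \<open>e a = e b\<close> by simp
    finally show "a = b"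
      using e_nz[OF \<open>a \<in> S\<close>] by simp
  qed
  have "pairwise orthogonal (e ` S)"
  proof (rule pairwiseI, elim imageE)
    fix a b x y assume "x \<noteq> y" "x = e a" "a \<in> S" "y = e b" "b \<in> S"
    have "a * inner (e a) (e b) = inner (M *v e a) (e b)"
      by (simp add: e_eig[OF \<open>a \<in> S\<close>])
    also have "\<dots> = inner (e a) (M *v e b)"
      by (rule sym)
    also have "\<dots> = b * inner (e a) (e b)"
      by (simp add: e_eig[OF \<open>b \<in> S\<close>])
    finally have "(a - b) * inner (e a) (e b) = 0"
      by (simp add: left_diff_distrib)
    moreover have "a \<noteq> b"
      using \<open>x \<noteq> y\<close> \<open>x = e a\<close> \<open>y = e b\<close> by blast
    ultimately show "orthogonal x y"
      using \<open>x = e a\<close> \<open>y = e b\<close> by (simp add: orthogonal_def)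
  qed
  moreover have "0 \<notin> e ` S"
    using e_nz by (metis imageE)
  ultimately have "finite (e ` S)"
    by (intro independent_imp_finite pairwise_orthogonal_independent)
  then have "finite S"
    using inj by (rule finite_imageD)
  then show ?thesis
    by (simp add: S_def)
qed

lemma norm_matrix_vector_le_largest_eigenvalue:
  fixes A :: "real^'n^'m"
  shows "(norm (A *v v))\<^sup>2 \<le> largest_eigenvalue (transpose A ** A) * (norm v)\<^sup>2"
proof -
  obtain v0 where "norm v0 = 1"
    and bound: "\<And>u. (norm (A *v u))\<^sup>2 \<le> (norm (A *v v0))\<^sup>2 * (norm u)\<^sup>2"
    using matrix_vector_norm_attains_max[of A] by blast
  define \<mu> where "\<mu> = (norm (A *v v0))\<^sup>2"
  have "(transpose A ** A) *v v0 = \<mu> *\<^sub>R v0"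
    using bound \<open>norm v0 = 1\<close> unfolding \<mu>_def
    by (intro gram_matrix_eigenvector_at_maximizer) auto
  then have "matrix_eigenvalue (transpose A ** A) \<mu>"
    using \<open>norm v0 = 1\<close> unfolding matrix_eigenvalue_def by (metis norm_zero zero_neq_one)
  moreover have "l \<le> \<mu>" if "matrix_eigenvalue (transpose A ** A) l" for l
    using gram_matrix_eigenvalue_le[OF that] bound unfolding \<mu>_def by blast
  moreover have "finite {l. matrix_eigenvalue (transpose A ** A) l}"
    by (rule finite_eigenvalues_symmetric) (metis inner_gram_matrix inner_commute)
  ultimately have "largest_eigenvalue (transpose A ** A) = \<mu>"
    unfolding largest_eigenvalue_def by (intro Max_eqI) auto
  then show ?thesis
    using bound unfolding \<mu>_def by simp
qed

lemma has_derivative_strict_contraction_near: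
  fixes \<psi> :: "'a::real_normed_vector \<Rightarrow> 'b::real_normed_vector"
  assumes "(\<psi> has_derivative L) (at y)" and "c < 1" and "\<And>v. norm (L v) \<le> c * norm v"
  shows "\<exists>\<delta>>0. \<forall>x. 0 < norm (x - y) \<and> norm (x - y) < \<delta> \<longrightarrow> norm (\<psi> x - \<psi> y) < norm (x - y)"
proof -
  define \<epsilon> where "\<epsilon> = (1 - c) / 2"
  have "\<epsilon> > 0"
    using \<open>c < 1\<close> by (simp add: \<epsilon>_def)
  then obtain \<delta> where "\<delta> > 0"
    and \<delta>: "\<And>x. norm (x - y) < \<delta> \<Longrightarrow> norm (\<psi> x - \<psi> y - L (x - y)) \<le> \<epsilon> * norm (x - y)"
    using assms(1) unfolding has_derivative_at_alt by blast
  have "norm (\<psi> x - \<psi> y) < norm (x - y)" if "0 < norm (x - y)" "norm (x - y) < \<delta>" for x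
  proof -
    have "norm (\<psi> x - \<psi> y) \<le> norm (L (x - y)) + norm (\<psi> x - \<psi> y - L (x - y))"
      by (metis add.commute diff_add_cancel norm_triangle_ineq)
    also have "\<dots> \<le> c * norm (x - y) + \<epsilon> * norm (x - y)"
      using assms(3) \<delta>[OF that(2)] by (rule add_mono)
    also have "\<dots> < norm (x - y)"
      using that(1) \<open>c < 1\<close> by (simp add: \<epsilon>_def field_simps)
    finally show ?thesis .
  qed
  with \<open>\<delta> > 0\<close> show ?thesis
    by blast
qed

lemma difference_target_residual_has_derivative:
  fixes f :: "'a::real_normed_vector \<Rightarrow> 'b::real_normed_vector" and g :: "'b \<Rightarrow> 'a"
  assumes "(f has_derivative Df) (at h)" and "(g has_derivative Dg) (at (f h))"
  shows "((\<lambda>ht. ht - f (h + g ht - g (f h))) has_derivative (\<lambda>d. d - Df (Dg d))) (at (f h))"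
proof -
  have "((\<lambda>ht. h + g ht - g (f h)) has_derivative Dg) (at (f h))"
    using has_derivative_diff[OF has_derivative_add[OF has_derivative_const assms(2)]
        has_derivative_const] by simp
  moreover have "(f has_derivative Df) (at (h + g (f h) - g (f h)))"
    using assms(1) by simp
  ultimately have "(f \<circ> (\<lambda>ht. h + g ht - g (f h)) has_derivative Df \<circ> Dg) (at (f h))"
    by (rule diff_chain_at)
  then show ?thesis
    using has_derivative_diff[OF has_derivative_ident] by (simp add: o_def)
qed

theorem theorem2:
  fixes f :: "real^'m \<Rightarrow> real^'n" and g :: "real^'n \<Rightarrow> real^'m"
    and h :: "real^'m"
    and Jf :: "real^'m^'n" and Jg :: "real^'n^'m"
  assumes df: "(f has_derivative (\<lambda>x. Jf *v x)) (at h)"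
    and dg: "(g has_derivative (\<lambda>y. Jg *v y)) (at (f h))"
    and eig: "largest_eigenvalue
               (transpose (mat 1 - Jf ** Jg) ** (mat 1 - Jf ** Jg)) < 1"
  shows "\<exists>\<delta>>0. \<forall>ht :: real^'n.
           0 < norm (ht - f h) \<and> norm (ht - f h) < \<delta> \<longrightarrow>
           (norm (ht - f (h + g ht - g (f h))))\<^sup>2 < (norm (ht - f h))\<^sup>2"
proof -
  define A where "A = mat 1 - Jf ** Jg"
  define \<Lambda> where "\<Lambda> = largest_eigenvalue (transpose A ** A)"
  define \<psi> where "\<psi> ht = ht - f (h + g ht - g (f h))" for ht
  have "(\<lambda>d. d - Jf *v (Jg *v d)) = (\<lambda>d. A *v d)"
    by (simp add: A_def matrix_vector_mul_assoc matrix_vector_mult_diff_rdistrib)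
  then have "(\<psi> has_derivative (\<lambda>d. A *v d)) (at (f h))"
    using difference_target_residual_has_derivative[OF df dg] unfolding \<psi>_def by simp
  moreover have "norm (A *v v) \<le> sqrt \<Lambda> * norm v" for v
    using real_sqrt_le_mono[OF norm_matrix_vector_le_largest_eigenvalue[of A v]]
    by (simp add: \<Lambda>_def real_sqrt_mult)
  moreover have "sqrt \<Lambda> < 1"
    using eig by (simp add: \<Lambda>_def A_def)
  ultimately obtain \<delta> where "\<delta> > 0" and \<delta>:
    "\<And>ht. 0 < norm (ht - f h) \<and> norm (ht - f h) < \<delta> \<Longrightarrow> norm (\<psi> ht - \<psi> (f h)) < norm (ht - f h)"
    using has_derivative_strict_contraction_near by blast
  have "\<psi> (f h) = 0"
    by (simp add: \<psi>_def)
  then show ?thesis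
    using \<open>\<delta> > 0\<close> \<delta> unfolding \<psi>_def by (intro exI[of _ \<delta>]) (auto intro: power_strict_mono)
qed

end
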